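(* Let $n\ge 1$, $0\le m\le n$, and fix $\chi\in\mathcal C^\infty_0(\mathbb R)$ with $0\le\chi\le1$, $\chi\equiv1$ on $[-1/2,1/2]$ and $\mathrm{supp}\,\chi\subset(-1,1)$. Let $0<\mu<1$ and $\mu'>0$. Then there exists $0<\delta_0<1$ such that the following holds. Let $0<\epsilon<1$, and let $\rho(z)=\sum_{j=1}^m(x_j^2+\mu_jy_j^2)+\sum_{j=m+1}^n(x_j^2-\mu_jy_j^2)$ on $\mathbb B^n_\epsilon\subset\mathbb C^n$ ($z_j=x_j+iy_j$), with $\mu'\le\mu_j\le1$ for $j=1,\dots,m$ and $0\le\mu_j\le\mu$ for $j=m+1,\dots,n$. Let $\delta_{m+1},\dots,\delta_n$ satisfy $0<\delta_j\le\mu_j$ and $\delta_j<\delta_0$, and set $\psi_{\epsilon,\delta}(z):=\chi(\|z\|^2/\epsilon^2)\sum_{j=m+1}^n\delta_jy_j^2$. Then $\rho_{\epsilon,\delta}:=\rho+\psi_{\epsilon,\delta}$ is strictly plurisubharmonic on $\mathbb B^n_\epsilon$, and all its critical points in $\mathbb B^n_\epsilon$ lie in $\{\rho_{\epsilon,\delta}\le0\}$.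
   Context: $\mathbb B^n_\epsilon$ is the open ball of radius $\epsilon$ about $0$ in $\mathbb C^n$. *)

theory Defs
  imports "HOL-Analysis.Analysis"
begin

definition smooth_real :: "(real \<Rightarrow> real) \<Rightarrow> bool" where
  "smooth_real f \<longleftrightarrow> (\<forall>k x. (deriv ^^ k) f differentiable at x)"

definition fsupp :: "(real \<Rightarrow> real) \<Rightarrow> real set" where
  "fsupp f = closure {x. f x \<noteq> 0}"

definition ddir :: "complex^'n \<Rightarrow> (complex^'n \<Rightarrow> complex) \<Rightarrow> complex^'n \<Rightarrow> complex" where
  "ddir v f p = frechet_derivative f (at p) v"

definition dz :: "'n::finite \<Rightarrow> (complex^'n \<Rightarrow> complex) \<Rightarrow> complex^'n \<Rightarrow> complex" where
  "dz j f p = (ddir (axis j 1) f p - \<i> * ddir (axis j \<i>) f p) / 2"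

definition dzbar :: "'n::finite \<Rightarrow> (complex^'n \<Rightarrow> complex) \<Rightarrow> complex^'n \<Rightarrow> complex" where
  "dzbar j f p = (ddir (axis j 1) f p + \<i> * ddir (axis j \<i>) f p) / 2"

definition levi_form :: "(complex^'n::finite \<Rightarrow> real) \<Rightarrow> complex^'n \<Rightarrow> complex^'n \<Rightarrow> complex" where
  "levi_form f p w =
     (\<Sum>j\<in>UNIV. \<Sum>k\<in>UNIV. dz j (dzbar k (\<lambda>z. complex_of_real (f z))) p * w$j * cnj (w$k))"

definition C2_on :: "(complex^'n::finite \<Rightarrow> real) \<Rightarrow> (complex^'n) set \<Rightarrow> bool" where
  "C2_on f U \<longleftrightarrow>
     (\<forall>x\<in>U. f differentiable at x) \<and>
     (\<forall>v. \<forall>x\<in>U. (\<lambda>y. frechet_derivative f (at y) v) differentiable at x) \<and>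
     (\<forall>u v. continuous_on U (\<lambda>y. frechet_derivative (\<lambda>y'. frechet_derivative f (at y') v) (at y) u))"

definition strictly_psh_on :: "(complex^'n::finite \<Rightarrow> real) \<Rightarrow> (complex^'n) set \<Rightarrow> bool" where
  "strictly_psh_on f U \<longleftrightarrow> open U \<and> C2_on f U \<and>
     (\<forall>p\<in>U. \<forall>w. w \<noteq> 0 \<longrightarrow> Re (levi_form f p w) > 0)"

end

theory Submission
  imports Defs
begin

(* The perturbation chi(|z|^2/eps^2) * sum_j delta_j y_j^2 has second derivatives of size
   O(delta0) on the ball, uniformly in eps: each derivative falling on chi(|z|^2/eps^2) costs
   a factor |z|/eps^2, which is paid for by the factor |z|^2 <= eps^2 of the quadratic form.
   Since the Levi form of the quadric rho is at least (1 - mu) |w|^2, small delta0 keeps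
   rho + psi strictly plurisubharmonic.  At a critical point the x_j-derivative is
   2 x_j (1 + O(delta0)), so x = 0; for j <= m the y_j-derivative is 2 y_j (mu_j + O(delta0))
   with mu_j >= mu', so y_j = 0; what remains is sum_{j>m} (chi delta_j - mu_j) y_j^2 <= 0. *)

lemma vec_eq_sum_Re_Im_axis:
  "(w::complex^'n::finite) = (\<Sum>j\<in>UNIV. Re (w$j) *\<^sub>R axis j 1 + Im (w$j) *\<^sub>R axis j \<i>)"
proof -
  have "(\<Sum>j\<in>UNIV. Re (w$j) *\<^sub>R axis j 1 + Im (w$j) *\<^sub>R axis j \<i>) $ i
      = (\<Sum>j\<in>UNIV. if i = j then Re (w$j) *\<^sub>R 1 + Im (w$j) *\<^sub>R \<i> else 0)" for i
    by (simp add: axis_def if_distrib cong: if_cong)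
  moreover have "Re (w$j) *\<^sub>R (1::complex) + Im (w$j) *\<^sub>R \<i> = w$j" for j
    by (simp add: complex_eq_iff)
  ultimately show ?thesis by (simp only: vec_eq_iff sum.delta finite UNIV_I if_True) simp
qed

lemma linear_eq_sum_Re_Im_axis:
  assumes "linear L"
  shows "L (w::complex^'n::finite) = (\<Sum>j\<in>UNIV. Re (w$j) * L (axis j 1) + Im (w$j) * L (axis j \<i>))"
  by (subst vec_eq_sum_Re_Im_axis)
     (simp only: linear_sum[OF assms] o_def linear_add[OF assms] linear_cmul[OF assms] real_scaleR_def)

lemma bilinear_eq_sum_Re_Im_axis:
  fixes H :: "complex^'n::finite \<Rightarrow> complex^'n \<Rightarrow> real"
  assumes "\<And>v. linear (\<lambda>u. H u v)" and "\<And>u. linear (H u)"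
  shows "H x x = (\<Sum>k\<in>UNIV. \<Sum>j\<in>UNIV.
      Re (x$k) * Re (x$j) * H (axis k 1) (axis j 1) + Re (x$k) * Im (x$j) * H (axis k 1) (axis j \<i>)
    + Im (x$k) * Re (x$j) * H (axis k \<i>) (axis j 1) + Im (x$k) * Im (x$j) * H (axis k \<i>) (axis j \<i>))"
  by (subst linear_eq_sum_Re_Im_axis[OF assms(1)], subst (1 2) linear_eq_sum_Re_Im_axis[OF assms(2)])
     (simp add: sum_distrib_left sum.distrib[symmetric] algebra_simps)

lemma dz_dzbar_of_real_eq:
  fixes f :: "complex^'n::finite \<Rightarrow> real" and H :: "complex^'n \<Rightarrow> complex^'n \<Rightarrow> real"
  assumes Df: "\<And>y. (f has_derivative Df y) (at y)"
    and H: "\<And>u. ((\<lambda>y. Df y u) has_derivative H u) (at p)"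
  shows "dz j (dzbar k (\<lambda>z. complex_of_real (f z))) p =
      ((H (axis k 1) (axis j 1) + H (axis k \<i>) (axis j \<i>))
       + \<i> * (H (axis k \<i>) (axis j 1) - H (axis k 1) (axis j \<i>))) / 4"
proof -
  have "ddir v (\<lambda>z. complex_of_real (f z)) y = of_real (Df y v)" for y v
    unfolding ddir_def using frechet_derivative_at[OF has_derivative_of_real[OF Df]] by metis
  then have dzbar: "dzbar k (\<lambda>z. complex_of_real (f z))
      = (\<lambda>y. (of_real (Df y (axis k 1)) + \<i> * of_real (Df y (axis k \<i>))) / 2)"
    by (auto simp: dzbar_def fun_eq_iff)
  have dzbar_deriv: "((\<lambda>y. (of_real (Df y (axis k 1)) + \<i> * of_real (Df y (axis k \<i>))) / 2) has_derivative
      (\<lambda>v. (of_real (H (axis k 1) v) + \<i> * of_real (H (axis k \<i>) v)) / 2)) (at p)"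
    by ((rule derivative_eq_intros H refl)+; simp)
  show ?thesis
    unfolding dz_def ddir_def dzbar frechet_derivative_at[OF dzbar_deriv, symmetric]
    by (simp add: complex_eq_iff)
qed

lemma Re_levi_form_eq_hessian:
  fixes f :: "complex^'n::finite \<Rightarrow> real"
  assumes Df: "\<And>y. (f has_derivative Df y) (at y)"
    and H: "\<And>u. ((\<lambda>y. Df y u) has_derivative H u) (at p)"
    and H_linear: "\<And>v. linear (\<lambda>u. H u v)"
  shows "Re (levi_form f p w) = (H w w + H (\<chi> j. \<i> * w$j) (\<chi> j. \<i> * w$j)) / 4"
proof -
  define wi where "wi = (\<chi> j. \<i> * w$j)"
  have H_linear': "linear (H u)" for u using H has_derivative_linear by blast
  have Re_mult_cnj: "Re (c * x * cnj y)
      = Re c * (Re x * Re y + Im x * Im y) - Im c * (Im x * Re y - Re x * Im y)" for c x y :: complex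
    by (simp add: algebra_simps)
  have "Re (levi_form f p w) = (\<Sum>j\<in>UNIV. \<Sum>k\<in>UNIV. (
      (Re (w$k) * Re (w$j) * H (axis k 1) (axis j 1) + Re (w$k) * Im (w$j) * H (axis k 1) (axis j \<i>)
     + Im (w$k) * Re (w$j) * H (axis k \<i>) (axis j 1) + Im (w$k) * Im (w$j) * H (axis k \<i>) (axis j \<i>))
    + (Re (wi$k) * Re (wi$j) * H (axis k 1) (axis j 1) + Re (wi$k) * Im (wi$j) * H (axis k 1) (axis j \<i>)
     + Im (wi$k) * Re (wi$j) * H (axis k \<i>) (axis j 1) + Im (wi$k) * Im (wi$j) * H (axis k \<i>) (axis j \<i>))) / 4)"
    unfolding levi_form_def Re_sum Re_mult_cnj dz_dzbar_of_real_eq[OF Df H]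
    by (intro sum.cong refl) (simp add: wi_def field_simps)
  also have "\<dots> = (H w w + H wi wi) / 4"
    unfolding bilinear_eq_sum_Re_Im_axis[OF H_linear H_linear', of w]
      bilinear_eq_sum_Re_Im_axis[OF H_linear H_linear', of wi]
    by (subst (2 3) sum.swap) (simp only: sum_divide_distrib[symmetric] sum.distrib[symmetric])
  finally show ?thesis unfolding wi_def .
qed

lemma power2_norm_eq_sum_Re_Im:
  "(norm (w::complex^'n::finite))\<^sup>2 = (\<Sum>j\<in>UNIV. (Re (w$j))\<^sup>2 + (Im (w$j))\<^sup>2)"
  unfolding power2_norm_eq_inner by (simp add: inner_vec_def inner_complex_def power2_eq_square)

lemma norm_chi_ii_mult: "norm (\<chi> j. \<i> * (w::complex^'n::finite)$j) = norm w"
  unfolding norm_vec_def by (simp add: norm_mult)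

lemmas has_derivative_vec_nth = bounded_linear.has_derivative[OF bounded_linear_vec_nth]

definition diag_form :: "('n::finite \<Rightarrow> real) \<Rightarrow> ('n \<Rightarrow> real) \<Rightarrow> complex^'n \<Rightarrow> complex^'n \<Rightarrow> real" where
  "diag_form a b y u = (\<Sum>j\<in>UNIV. a j * Re (y$j) * Re (u$j) + b j * Im (y$j) * Im (u$j))"

lemma diag_form_commute: "diag_form a b y u = diag_form a b u y"
  unfolding diag_form_def by (simp add: algebra_simps)

lemma linear_diag_form_left: "linear (\<lambda>y. diag_form a b y u)"
  by (rule linearI) (simp_all add: diag_form_def algebra_simps sum.distrib sum_distrib_left)

lemma linear_diag_form_right: "linear (diag_form a b u)"
  by (rule linearI) (simp_all add: diag_form_def algebra_simps sum.distrib sum_distrib_left)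

lemma has_derivative_diag_form_left: "((\<lambda>y. diag_form a b y u) has_derivative (\<lambda>v. diag_form a b v u)) F"
  by (rule linear_imp_has_derivative[OF linear_diag_form_left])

lemma has_derivative_diag_form_self:
  "((\<lambda>y. diag_form a b y y) has_derivative (\<lambda>v. 2 * diag_form a b x v)) (at x)"
proof -
  have "((\<lambda>y. diag_form a b y y) has_derivative (\<lambda>v. diag_form a b v x + diag_form a b x v)) (at x)"
    unfolding diag_form_def
    by ((rule derivative_eq_intros has_derivative_vec_nth refl)+;
        simp add: fun_eq_iff sum.distrib[symmetric] algebra_simps)
  then show ?thesis by (simp add: diag_form_commute[of a b _ x])
qed

lemma diag_form_axis_1: "diag_form a b y (axis j 1) = a j * Re (y$j)"
proof -
  have e: "(\<lambda>k. a k * Re (y$k) * Re (axis j 1 $ k) + b k * Im (y$k) * Im (axis j 1 $ k))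
      = (\<lambda>k. if k = j then a j * Re (y$j) else 0)"
    by (auto simp: axis_def fun_eq_iff)
  show ?thesis unfolding diag_form_def e by simp
qed

lemma diag_form_axis_ii: "diag_form a b y (axis j \<i>) = b j * Im (y$j)"
proof -
  have e: "(\<lambda>k. a k * Re (y$k) * Re (axis j \<i> $ k) + b k * Im (y$k) * Im (axis j \<i> $ k))
      = (\<lambda>k. if k = j then b j * Im (y$j) else 0)"
    by (auto simp: axis_def fun_eq_iff)
  show ?thesis unfolding diag_form_def e by simp
qed

lemma diag_form_self_add_ii_mult:
  "diag_form a b w w + diag_form a b (\<chi> j. \<i> * w$j) (\<chi> j. \<i> * w$j)
    = (\<Sum>j\<in>UNIV. (a j + b j) * ((Re (w$j))\<^sup>2 + (Im (w$j))\<^sup>2))"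
  unfolding diag_form_def by (simp add: sum.distrib[symmetric] algebra_simps power2_eq_square)

lemma diag_form_Im_self_nonneg: "(\<And>j. 0 \<le> d j) \<Longrightarrow> 0 \<le> diag_form (\<lambda>_. 0) d y y"
  unfolding diag_form_def by (intro sum_nonneg) (simp add: mult.assoc)

lemma abs_diag_form_Im_le:
  assumes "\<forall>j. 0 \<le> d j \<and> d j \<le> D"
  shows "\<bar>diag_form (\<lambda>_. 0) d y u\<bar> \<le> D * norm y * norm u"
proof -
  have "\<bar>diag_form (\<lambda>_. 0) d y u\<bar> \<le> (\<Sum>j\<in>UNIV. \<bar>d j * Im (y$j) * Im (u$j)\<bar>)"
    unfolding diag_form_def by simp
  also have "\<dots> \<le> (\<Sum>j\<in>UNIV. D * (norm (y$j) * norm (u$j)))"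
  proof (rule sum_mono)
    fix j
    have "\<bar>Im (y$j)\<bar> * \<bar>Im (u$j)\<bar> \<le> norm (y$j) * norm (u$j)"
      by (intro mult_mono) (simp_all add: abs_Im_le_cmod)
    moreover have "\<bar>d j\<bar> \<le> D" using assms by simp
    ultimately show "\<bar>d j * Im (y$j) * Im (u$j)\<bar> \<le> D * (norm (y$j) * norm (u$j))"
      by (simp add: abs_mult mult.assoc mult_mono)
  qed
  also have "\<dots> \<le> D * (norm y * norm u)"
    using L2_set_mult_ineq[of "\<lambda>j. norm (y$j)" "\<lambda>j. norm (u$j)" UNIV] assms
    unfolding norm_vec_def sum_distrib_left[symmetric] by (intro mult_left_mono) auto
  finally show ?thesis by simp
qed

lemma has_derivative_divide_right:
  fixes f :: "'a::real_normed_vector \<Rightarrow> real"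
  assumes "(f has_derivative f') F"
  shows "((\<lambda>x. f x / c) has_derivative (\<lambda>x. f' x / c)) F"
  unfolding divide_inverse by (rule has_derivative_mult_left[OF assms])

lemma has_derivative_sqnorm_divide:
  "((\<lambda>y. (norm y)\<^sup>2 / e2) has_derivative (\<lambda>v. 2 * inner y v / e2)) (at (y::'a::real_inner))"
  using has_derivative_divide_right[OF has_derivative_sqnorm_at[of y], where c = e2] by simp

lemma has_derivative_comp_sqnorm_divide:
  fixes y :: "'a::real_inner"
  assumes "\<And>x. (g has_real_derivative g' x) (at x)"
  shows "((\<lambda>y. g ((norm y)\<^sup>2 / e2)) has_derivative
      (\<lambda>v. (2 * inner y v / e2) * g' ((norm y)\<^sup>2 / e2))) (at y)"
  by (rule DERIV_compose_FDERIV[OF assms has_derivative_sqnorm_divide])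

text \<open>The function of the theorem, written with b j = \<mu>_j for j in S and b j = -\<mu>_j otherwise,
  d j = 0 for j in S and d j = \<delta>_j otherwise, and e2 = \<epsilon>^2.\<close>
definition perturbed_quadric ::
  "(real \<Rightarrow> real) \<Rightarrow> ('n::finite \<Rightarrow> real) \<Rightarrow> ('n \<Rightarrow> real) \<Rightarrow> real \<Rightarrow> complex^'n \<Rightarrow> real" where
  "perturbed_quadric c b d e2 z =
     diag_form (\<lambda>_. 1) b z z + c ((norm z)\<^sup>2 / e2) * diag_form (\<lambda>_. 0) d z z"

definition perturbed_quadric_deriv :: "(real \<Rightarrow> real) \<Rightarrow> (real \<Rightarrow> real) \<Rightarrow>
    ('n::finite \<Rightarrow> real) \<Rightarrow> ('n \<Rightarrow> real) \<Rightarrow> real \<Rightarrow> complex^'n \<Rightarrow> complex^'n \<Rightarrow> real" where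
  "perturbed_quadric_deriv c c1 b d e2 y u =
     2 * diag_form (\<lambda>_. 1) b y u
     + c1 ((norm y)\<^sup>2 / e2) * (2 * inner y u / e2) * diag_form (\<lambda>_. 0) d y y
     + c ((norm y)\<^sup>2 / e2) * (2 * diag_form (\<lambda>_. 0) d y u)"

definition perturbed_quadric_hessian :: "(real \<Rightarrow> real) \<Rightarrow> (real \<Rightarrow> real) \<Rightarrow> (real \<Rightarrow> real) \<Rightarrow>
    ('n::finite \<Rightarrow> real) \<Rightarrow> ('n \<Rightarrow> real) \<Rightarrow> real \<Rightarrow> complex^'n \<Rightarrow> complex^'n \<Rightarrow> complex^'n \<Rightarrow> real" where
  "perturbed_quadric_hessian c c1 c2 b d e2 y u v =
     2 * diag_form (\<lambda>_. 1) b v u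
     + c2 ((norm y)\<^sup>2 / e2) * (2 * inner y v / e2) * (2 * inner y u / e2) * diag_form (\<lambda>_. 0) d y y
     + c1 ((norm y)\<^sup>2 / e2) * (2 * inner v u / e2) * diag_form (\<lambda>_. 0) d y y
     + c1 ((norm y)\<^sup>2 / e2) * (2 * inner y u / e2) * (2 * diag_form (\<lambda>_. 0) d y v)
     + c1 ((norm y)\<^sup>2 / e2) * (2 * inner y v / e2) * (2 * diag_form (\<lambda>_. 0) d y u)
     + c ((norm y)\<^sup>2 / e2) * (2 * diag_form (\<lambda>_. 0) d v u)"

lemma linear_perturbed_quadric_hessian: "linear (\<lambda>u. perturbed_quadric_hessian c c1 c2 b d e2 y u v)"
  by (rule linearI)
     (simp_all add: perturbed_quadric_hessian_def linear_add[OF linear_diag_form_right]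
       linear_scale[OF linear_diag_form_right] algebra_simps add_divide_distrib)

lemma abs_mult_le_mult:
  fixes c A B K :: real
  assumes "0 \<le> A" "A \<le> B" "\<bar>c\<bar> \<le> K" shows "\<bar>c * A\<bar> \<le> K * B"
proof -
  have "\<bar>c * A\<bar> = \<bar>c\<bar> * A" using assms by (simp add: abs_mult)
  also have "\<dots> \<le> K * B" using assms by (intro mult_mono) auto
  finally show ?thesis .
qed

lemma cutoff_hessian_terms_bound:
  fixes K1 K2 D e2 r t X Y P Z cc cc1 cc2 :: real
  assumes K2: "\<bar>cc2\<bar> \<le> K2" and K1: "\<bar>cc1\<bar> \<le> K1" and c: "0 \<le> cc" "cc \<le> 1"
    and r: "0 \<le> r" "r\<^sup>2 \<le> e2" and e2: "0 < e2" and t: "0 \<le> t" and D: "0 \<le> D"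
    and X: "\<bar>X\<bar> \<le> r * t" and Y: "\<bar>Y\<bar> \<le> D * r * t" and Z: "\<bar>Z\<bar> \<le> D * t * t"
    and P: "0 \<le> P" "P \<le> D * r\<^sup>2"
  shows "\<bar>cc2 * (2 * X / e2) * (2 * X / e2) * P + cc1 * (2 * t\<^sup>2 / e2) * P
          + cc1 * (2 * X / e2) * (2 * Y) + cc1 * (2 * X / e2) * (2 * Y) + cc * (2 * Z)\<bar>
         \<le> D * t\<^sup>2 * (4 * K2 + 10 * K1 + 2)"
proof -
  have r4: "r\<^sup>2 * r\<^sup>2 \<le> e2 * e2" using r e2 by (intro mult_mono) auto
  have XX: "X\<^sup>2 \<le> (r * t)\<^sup>2" using X by (metis abs_ge_zero abs_le_square_iff abs_of_nonneg order_trans)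
  have A0: "0 \<le> 4 * X\<^sup>2 * P / (e2 * e2)" using P e2 by simp
  have "X\<^sup>2 * P \<le> (r * t)\<^sup>2 * (D * r\<^sup>2)" using XX P by (intro mult_mono) auto
  also have "\<dots> = (r\<^sup>2 * r\<^sup>2) * (D * t\<^sup>2)" by (simp add: power_mult_distrib)
  also have "\<dots> \<le> (e2 * e2) * (D * t\<^sup>2)" using r4 D by (intro mult_right_mono) auto
  finally have "X\<^sup>2 * P \<le> (e2 * e2) * (D * t\<^sup>2)" .
  then have A1: "4 * X\<^sup>2 * P / (e2 * e2) \<le> 4 * (D * t\<^sup>2)" using e2 by (simp add: divide_le_eq mult.assoc mult.commute)
  have TA: "\<bar>cc2 * (2 * X / e2) * (2 * X / e2) * P\<bar> \<le> K2 * (4 * (D * t\<^sup>2))"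
  proof -
    have "cc2 * (2 * X / e2) * (2 * X / e2) * P = cc2 * (4 * X\<^sup>2 * P / (e2 * e2))"
      by (simp add: power2_eq_square)
    then show ?thesis using abs_mult_le_mult[OF A0 A1 K2] by (simp only:)
  qed
  have B0: "0 \<le> 2 * t\<^sup>2 * P / e2" using P e2 by simp
  have "t\<^sup>2 * P \<le> t\<^sup>2 * (D * r\<^sup>2)" using P by (intro mult_left_mono) auto
  also have "\<dots> \<le> t\<^sup>2 * (D * e2)" using r D by (intro mult_left_mono) auto
  finally have B1: "2 * t\<^sup>2 * P / e2 \<le> 2 * (D * t\<^sup>2)" using e2 by (simp add: divide_le_eq algebra_simps)
  have TB: "\<bar>cc1 * (2 * t\<^sup>2 / e2) * P\<bar> \<le> K1 * (2 * (D * t\<^sup>2))"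
    using abs_mult_le_mult[OF B0 B1 K1] by simp
  have C0: "0 \<le> 4 * \<bar>X\<bar> * \<bar>Y\<bar> / e2" using e2 by simp
  have "\<bar>X\<bar> * \<bar>Y\<bar> \<le> (r * t) * (D * r * t)" using X Y r t by (intro mult_mono) auto
  also have "\<dots> = r\<^sup>2 * (D * t\<^sup>2)" by (simp add: power2_eq_square)
  also have "\<dots> \<le> e2 * (D * t\<^sup>2)" using r D by (intro mult_right_mono) auto
  finally have C1: "4 * \<bar>X\<bar> * \<bar>Y\<bar> / e2 \<le> 4 * (D * t\<^sup>2)" using e2 by (simp add: divide_le_eq algebra_simps)
  have TC: "\<bar>cc1 * (2 * X / e2) * (2 * Y)\<bar> \<le> K1 * (4 * (D * t\<^sup>2))"
  proof -
    have "\<bar>cc1 * (2 * X / e2) * (2 * Y)\<bar> = \<bar>cc1 * (4 * \<bar>X\<bar> * \<bar>Y\<bar> / e2)\<bar>"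
      using e2 by (simp add: abs_mult)
    then show ?thesis using abs_mult_le_mult[OF C0 C1 K1] by (simp only:)
  qed
  have TE: "\<bar>cc * (2 * Z)\<bar> \<le> 1 * (2 * (D * t\<^sup>2))"
    using abs_mult_le_mult[of "\<bar>2 * Z\<bar>" "2 * (D * t\<^sup>2)" cc 1] Z c by (simp add: abs_mult power2_eq_square)
  have tri: "\<And>a b c d e::real. \<bar>a+b+c+d+e\<bar> \<le> \<bar>a\<bar>+\<bar>b\<bar>+\<bar>c\<bar>+\<bar>d\<bar>+\<bar>e\<bar>" by arith
  have "\<bar>cc2 * (2 * X / e2) * (2 * X / e2) * P + cc1 * (2 * t\<^sup>2 / e2) * P
          + cc1 * (2 * X / e2) * (2 * Y) + cc1 * (2 * X / e2) * (2 * Y) + cc * (2 * Z)\<bar>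
        \<le> K2 * (4 * (D * t\<^sup>2)) + K1 * (2 * (D * t\<^sup>2)) + K1 * (4 * (D * t\<^sup>2)) + K1 * (4 * (D * t\<^sup>2)) + 1 * (2 * (D * t\<^sup>2))"
    using TA TB TC TE tri[of "cc2 * (2 * X / e2) * (2 * X / e2) * P" "cc1 * (2 * t\<^sup>2 / e2) * P"
        "cc1 * (2 * X / e2) * (2 * Y)" "cc1 * (2 * X / e2) * (2 * Y)" "cc * (2 * Z)"] by linarith
  also have "\<dots> = D * t\<^sup>2 * (4 * K2 + 10 * K1 + 2)" by (simp add: algebra_simps)
  finally show ?thesis .
qed

lemma abs_perturbed_quadric_hessian_sub_le:
  assumes c01: "\<forall>t. 0 \<le> c t \<and> c t \<le> 1"
    and K1: "\<forall>s\<in>{0..1}. \<bar>c1 s\<bar> \<le> K1" and K2: "\<forall>s\<in>{0..1}. \<bar>c2 s\<bar> \<le> K2"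
    and e2: "0 < e2" and p: "(norm p)\<^sup>2 \<le> e2" and d: "\<forall>j. 0 \<le> d j \<and> d j \<le> D"
  shows "\<bar>perturbed_quadric_hessian c c1 c2 b d e2 p v v - 2 * diag_form (\<lambda>_. 1) b v v\<bar>
    \<le> D * (norm v)\<^sup>2 * (4 * K2 + 10 * K1 + 2)"
proof -
  define s where "s = (norm p)\<^sup>2 / e2"
  have s: "s \<in> {0..1}" using p e2 by (simp add: s_def)
  have "perturbed_quadric_hessian c c1 c2 b d e2 p v v - 2 * diag_form (\<lambda>_. 1) b v v =
      c2 s * (2 * inner p v / e2) * (2 * inner p v / e2) * diag_form (\<lambda>_. 0) d p p
      + c1 s * (2 * (norm v)\<^sup>2 / e2) * diag_form (\<lambda>_. 0) d p p
      + c1 s * (2 * inner p v / e2) * (2 * diag_form (\<lambda>_. 0) d p v)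
      + c1 s * (2 * inner p v / e2) * (2 * diag_form (\<lambda>_. 0) d p v)
      + c s * (2 * diag_form (\<lambda>_. 0) d v v)"
    unfolding perturbed_quadric_hessian_def s_def by (simp add: power2_norm_eq_inner)
  also have "\<bar>\<dots>\<bar> \<le> D * (norm v)\<^sup>2 * (4 * K2 + 10 * K1 + 2)"
  proof (rule cutoff_hessian_terms_bound[where r = "norm p"])
    show "\<bar>c2 s\<bar> \<le> K2" "\<bar>c1 s\<bar> \<le> K1" using K1 K2 s by blast+
    show "0 \<le> c s" "c s \<le> 1" using c01 by auto
    show "0 \<le> D" using d by (meson order_trans)
    show "\<bar>inner p v\<bar> \<le> norm p * norm v" by (rule Cauchy_Schwarz_ineq2)
    show "\<bar>diag_form (\<lambda>_. 0) d p v\<bar> \<le> D * norm p * norm v"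
      and "\<bar>diag_form (\<lambda>_. 0) d v v\<bar> \<le> D * norm v * norm v"
      by (rule abs_diag_form_Im_le[OF d])+
    show "0 \<le> diag_form (\<lambda>_. 0) d p p" using d by (intro diag_form_Im_self_nonneg) auto
    show "diag_form (\<lambda>_. 0) d p p \<le> D * (norm p)\<^sup>2"
      using abs_diag_form_Im_le[OF d, of p p] by (simp add: power2_eq_square mult.assoc)
  qed (use p e2 in auto)
  finally show ?thesis .
qed

lemma perturbed_quadric_deriv_axis_1:
  "perturbed_quadric_deriv c c1 b d e2 p (axis j 1) =
     2 * Re (p$j) * (1 + c1 ((norm p)\<^sup>2 / e2) * (diag_form (\<lambda>_. 0) d p p / e2))"
  unfolding perturbed_quadric_deriv_def diag_form_axis_1 inner_axis by (simp add: algebra_simps)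

lemma perturbed_quadric_deriv_axis_ii:
  "perturbed_quadric_deriv c c1 b d e2 p (axis j \<i>) =
     2 * Im (p$j) * (b j + c1 ((norm p)\<^sup>2 / e2) * (diag_form (\<lambda>_. 0) d p p / e2)
       + c ((norm p)\<^sup>2 / e2) * d j)"
  unfolding perturbed_quadric_deriv_def diag_form_axis_ii inner_axis by (simp add: algebra_simps)

lemma perturbed_quadric_of_Re_eq_0:
  assumes "\<And>j. Re (p$j) = 0"
  shows "perturbed_quadric c b d e2 p = (\<Sum>j\<in>UNIV. (b j + c ((norm p)\<^sup>2 / e2) * d j) * (Im (p$j))\<^sup>2)"
  unfolding perturbed_quadric_def diag_form_def
  by (simp add: assms sum_distrib_left sum.distrib[symmetric] algebra_simps power2_eq_square)

context
  fixes c c1 c2 :: "real \<Rightarrow> real"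
  assumes c_deriv: "\<And>x. (c has_real_derivative c1 x) (at x)"
    and c1_deriv: "\<And>x. (c1 has_real_derivative c2 x) (at x)"
begin

lemma has_derivative_perturbed_quadric:
  "(perturbed_quadric c b d e2 has_derivative perturbed_quadric_deriv c c1 b d e2 y) (at y)"
  unfolding perturbed_quadric_def[abs_def] perturbed_quadric_deriv_def
  by (rule derivative_eq_intros has_derivative_diag_form_self
        has_derivative_comp_sqnorm_divide[OF c_deriv] refl)+ (simp add: fun_eq_iff algebra_simps)

lemma has_derivative_perturbed_quadric_deriv:
  "((\<lambda>y. perturbed_quadric_deriv c c1 b d e2 y u) has_derivative
      perturbed_quadric_hessian c c1 c2 b d e2 y u) (at y)"
  unfolding perturbed_quadric_deriv_def perturbed_quadric_hessian_def
  by (rule has_derivative_divide_right derivative_eq_intros has_derivative_diag_form_left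
        has_derivative_diag_form_self
        has_derivative_comp_sqnorm_divide[OF c_deriv] has_derivative_comp_sqnorm_divide[OF c1_deriv] refl)+
     (simp add: fun_eq_iff algebra_simps inner_commute)

lemma continuous_on_perturbed_quadric_hessian:
  fixes S :: "(complex^'n::finite) set"
  assumes "continuous_on UNIV c2"
  shows "continuous_on S (\<lambda>y. perturbed_quadric_hessian c c1 c2 b d e2 y u v)"
proof -
  have cont: "continuous_on S f" if "\<And>y. (f has_derivative f' y) (at y)"
    for f :: "complex^'n \<Rightarrow> real" and f'
    using that by (intro has_derivative_continuous_on) (blast intro: has_derivative_at_withinI)
  have "continuous_on S (\<lambda>y. c2 ((norm y)\<^sup>2 / e2))"
    by (rule continuous_on_compose2[OF assms cont[OF has_derivative_sqnorm_divide] subset_UNIV])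
  moreover note cont[OF has_derivative_comp_sqnorm_divide[OF c1_deriv]]
    cont[OF has_derivative_comp_sqnorm_divide[OF c_deriv]]
    cont[OF has_derivative_divide_right[OF has_derivative_mult_right[OF
          has_derivative_inner_left[OF has_derivative_ident]]]]
    cont[OF has_derivative_diag_form_self] cont[OF has_derivative_diag_form_left]
  ultimately show ?thesis unfolding perturbed_quadric_hessian_def
    by (intro continuous_on_add continuous_on_mult continuous_on_const) auto
qed

lemma C2_on_perturbed_quadric:
  assumes "continuous_on UNIV c2"
  shows "C2_on (perturbed_quadric c b d e2) U"
proof -
  have "frechet_derivative (perturbed_quadric c b d e2) (at y) = perturbed_quadric_deriv c c1 b d e2 y"
    for y by (rule frechet_derivative_at[OF has_derivative_perturbed_quadric, symmetric])
  moreover have "frechet_derivative (\<lambda>y. perturbed_quadric_deriv c c1 b d e2 y v) (at y)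
      = perturbed_quadric_hessian c c1 c2 b d e2 y v" for y v
    by (rule frechet_derivative_at[OF has_derivative_perturbed_quadric_deriv, symmetric])
  ultimately show ?thesis
    unfolding C2_on_def
    by (auto intro!: differentiableI[OF has_derivative_perturbed_quadric]
        differentiableI[OF has_derivative_perturbed_quadric_deriv]
        continuous_on_perturbed_quadric_hessian[OF assms])
qed

lemma Re_levi_form_perturbed_quadric_pos:
  assumes c01: "\<forall>t. 0 \<le> c t \<and> c t \<le> 1"
    and K1: "\<forall>s\<in>{0..1}. \<bar>c1 s\<bar> \<le> K1" and K2: "\<forall>s\<in>{0..1}. \<bar>c2 s\<bar> \<le> K2"
    and e2: "0 < e2" and p: "(norm p)\<^sup>2 \<le> e2" and d: "\<forall>j. 0 \<le> d j \<and> d j \<le> D"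
    and b: "\<And>j. - \<mu> \<le> b j" and D: "D * (4 * K2 + 10 * K1 + 2) < 1 - \<mu>" and w: "w \<noteq> 0"
  shows "0 < Re (levi_form (perturbed_quadric c b d e2) p w)"
proof -
  define wi where "wi = (\<chi> j. \<i> * w$j)"
  let ?H = "perturbed_quadric_hessian c c1 c2 b d e2 p"
  let ?E = "D * (norm w)\<^sup>2 * (4 * K2 + 10 * K1 + 2)"
  have levi: "Re (levi_form (perturbed_quadric c b d e2) p w) = (?H w w + ?H wi wi) / 4"
    unfolding wi_def
    by (rule Re_levi_form_eq_hessian[OF has_derivative_perturbed_quadric
          has_derivative_perturbed_quadric_deriv linear_perturbed_quadric_hessian])
  have err: "\<bar>?H v v - 2 * diag_form (\<lambda>_. 1) b v v\<bar> \<le> D * (norm v)\<^sup>2 * (4 * K2 + 10 * K1 + 2)"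
    for v by (rule abs_perturbed_quadric_hessian_sub_le[OF c01 K1 K2 e2 p d])
  have "norm wi = norm w" unfolding wi_def by (rule norm_chi_ii_mult)
  then have "\<bar>?H w w - 2 * diag_form (\<lambda>_. 1) b w w\<bar> \<le> ?E"
    and "\<bar>?H wi wi - 2 * diag_form (\<lambda>_. 1) b wi wi\<bar> \<le> ?E"
    using err[of w] err[of wi] by simp_all
  moreover have "(1 - \<mu>) * (norm w)\<^sup>2 \<le> diag_form (\<lambda>_. 1) b w w + diag_form (\<lambda>_. 1) b wi wi"
    unfolding wi_def diag_form_self_add_ii_mult power2_norm_eq_sum_Re_Im sum_distrib_left
    by (rule sum_mono, rule mult_right_mono) (use b in auto)
  moreover have "?E < (1 - \<mu>) * (norm w)\<^sup>2"
    using mult_strict_right_mono[OF D, of "(norm w)\<^sup>2"] w by (simp add: algebra_simps)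
  ultimately show ?thesis unfolding levi by (simp add: abs_le_iff)
qed

lemma strictly_psh_on_perturbed_quadric:
  fixes b d :: "'n::finite \<Rightarrow> real"
  assumes c2: "continuous_on UNIV c2" and c01: "\<forall>t. 0 \<le> c t \<and> c t \<le> 1"
    and K1: "\<forall>s\<in>{0..1}. \<bar>c1 s\<bar> \<le> K1" and K2: "\<forall>s\<in>{0..1}. \<bar>c2 s\<bar> \<le> K2"
    and d: "\<forall>j. 0 \<le> d j \<and> d j \<le> D"
    and b: "\<And>j. - \<mu> \<le> b j" and D: "D * (4 * K2 + 10 * K1 + 2) < 1 - \<mu>"
  shows "strictly_psh_on (perturbed_quadric c b d (\<epsilon>\<^sup>2)) (ball 0 \<epsilon>)"
  unfolding strictly_psh_on_def
proof (intro conjI ballI allI impI open_ball C2_on_perturbed_quadric[OF c2])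
  fix p w :: "complex^'n"
  assume "p \<in> ball 0 \<epsilon>" "w \<noteq> 0"
  moreover from this(1) have "norm p < \<epsilon>" by simp
  then have "0 < \<epsilon>" "(norm p)\<^sup>2 \<le> \<epsilon>\<^sup>2"
    using norm_ge_zero[of p] by (linarith, auto intro!: power_mono)
  ultimately show "0 < Re (levi_form (perturbed_quadric c b d (\<epsilon>\<^sup>2)) p w)"
    by (intro Re_levi_form_perturbed_quadric_pos[OF c01 K1 K2 _ _ d b D]) auto
qed

lemma perturbed_quadric_nonpos_at_critical_point:
  assumes c01: "\<forall>t. 0 \<le> c t \<and> c t \<le> 1" and K1: "\<forall>s\<in>{0..1}. \<bar>c1 s\<bar> \<le> K1"
    and e2: "0 < e2" and p: "(norm p)\<^sup>2 \<le> e2" and d: "\<forall>j. 0 \<le> d j \<and> d j \<le> D"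
    and DK1: "D * K1 < 1" "D * K1 < \<mu>'"
    and b_in: "\<And>j. j \<in> S \<Longrightarrow> \<mu>' \<le> b j \<and> d j = 0" and b_out: "\<And>j. j \<notin> S \<Longrightarrow> d j \<le> - b j"
    and crit: "(perturbed_quadric c b d e2 has_derivative (\<lambda>_. 0)) (at p)"
  shows "perturbed_quadric c b d e2 p \<le> 0"
proof -
  define s where "s = (norm p)\<^sup>2 / e2"
  define T where "T = diag_form (\<lambda>_. 0) d p p / e2"
  have "0 \<le> D" using d by (meson order_trans)
  have "0 \<le> T" using d e2 by (simp add: T_def diag_form_Im_self_nonneg)
  moreover have "diag_form (\<lambda>_. 0) d p p \<le> D * e2"
    using abs_diag_form_Im_le[OF d, of p p] mult_left_mono[OF p \<open>0 \<le> D\<close>]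
    by (simp add: power2_eq_square mult.assoc)
  then have "T \<le> D" using e2 by (simp add: T_def divide_le_eq)
  moreover have "s \<in> {0..1}" using p e2 by (simp add: s_def)
  ultimately have small: "\<bar>c1 s * T\<bar> \<le> D * K1"
    using K1 by (simp add: abs_mult mult.commute mult_mono)
  have grad: "perturbed_quadric_deriv c c1 b d e2 p = (\<lambda>_. 0)"
    by (rule has_derivative_unique[OF has_derivative_perturbed_quadric crit])
  have Re0: "Re (p$j) = 0" for j
    using fun_cong[OF grad, of "axis j 1"] small DK1(1)
    unfolding perturbed_quadric_deriv_axis_1 s_def[symmetric] T_def[symmetric] by (auto simp: abs_le_iff)
  have "(b j + c s * d j) * (Im (p$j))\<^sup>2 \<le> 0" for j
  proof (cases "j \<in> S")
    case True
    then have "Im (p$j) * (b j + c1 s * T) = 0" "\<mu>' \<le> b j" "d j = 0"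
      using fun_cong[OF grad, of "axis j \<i>"] b_in
      unfolding perturbed_quadric_deriv_axis_ii s_def[symmetric] T_def[symmetric] by auto
    with small DK1(2) show ?thesis by (auto simp: abs_le_iff)
  next
    case False
    have "c s * d j \<le> d j" using c01 d by (simp add: mult_left_le_one_le)
    with b_out[OF False] show ?thesis by (simp add: mult_nonpos_nonneg)
  qed
  then show ?thesis
    unfolding perturbed_quadric_of_Re_eq_0[OF Re0] s_def by (simp add: sum_nonpos)
qed

end

lemma smooth_real_second_derivative:
  assumes "smooth_real f"
  shows "\<And>x. (f has_real_derivative deriv f x) (at x)"
    and "\<And>x. (deriv f has_real_derivative deriv (deriv f) x) (at x)"
    and "continuous_on UNIV (deriv (deriv f))"
proof -
  have diff: "(deriv ^^ k) f differentiable at x" for k x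
    using assms unfolding smooth_real_def by blast
  show "(f has_real_derivative deriv f x) (at x)" for x
    using diff[of 0 x] by (simp add: DERIV_deriv_iff_real_differentiable)
  show "(deriv f has_real_derivative deriv (deriv f) x) (at x)" for x
    using diff[of 1 x] by (simp add: DERIV_deriv_iff_real_differentiable)
  show "continuous_on UNIV (deriv (deriv f))"
    using diff[of 2] unfolding numeral_2_eq_2
    by (auto intro!: continuous_at_imp_continuous_on differentiable_imp_continuous_within)
qed

lemma smooth_real_derivatives_bounded:
  assumes "smooth_real f" and "compact A"
  obtains K1 K2 where "0 \<le> K1" "0 \<le> K2"
    and "\<forall>s\<in>A. \<bar>deriv f s\<bar> \<le> K1" "\<forall>s\<in>A. \<bar>deriv (deriv f) s\<bar> \<le> K2"
proof -
  note f_deriv = smooth_real_second_derivative[OF assms(1)]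
  have "continuous_on A (deriv f)" "continuous_on A (deriv (deriv f))"
    using f_deriv by (meson DERIV_isCont continuous_at_imp_continuous_on continuous_on_subset subset_UNIV)+
  from this[THEN continuous_on_compact_bound[OF assms(2)]] show ?thesis
    unfolding real_norm_def by (metis that)
qed

lemma exists_small_pos_mult_less:
  fixes C m :: real
  assumes "0 \<le> C" and "0 < m"
  shows "\<exists>\<delta>. 0 < \<delta> \<and> \<delta> < 1 \<and> \<delta> * C < m"
proof (intro exI conjI)
  let ?\<delta> = "min (1/2) (m / (C + 1))"
  show "0 < ?\<delta>" "?\<delta> < 1" using assms by auto
  have "?\<delta> * C \<le> m / (C + 1) * C" using assms by (intro mult_right_mono) auto
  also have "\<dots> < m" using assms by (simp add: field_simps)
  finally show "?\<delta> * C < m" .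
qed

lemma split_quadric_eq_perturbed_quadric:
  "(\<lambda>z::complex^'n::finite.
      (\<Sum>j\<in>S. (Re (z$j))\<^sup>2 + \<mu>s j * (Im (z$j))\<^sup>2)
    + (\<Sum>j\<in>UNIV - S. (Re (z$j))\<^sup>2 - \<mu>s j * (Im (z$j))\<^sup>2)
    + c ((norm z)\<^sup>2 / e2) * (\<Sum>j\<in>UNIV - S. \<delta> j * (Im (z$j))\<^sup>2))
   = perturbed_quadric c (\<lambda>j. if j \<in> S then \<mu>s j else - \<mu>s j) (\<lambda>j. if j \<in> S then 0 else \<delta> j) e2"
proof
  fix z :: "complex^'n"
  have "diag_form (\<lambda>_. 1) (\<lambda>j. if j \<in> S then \<mu>s j else - \<mu>s j) z z
      = (\<Sum>j\<in>UNIV. if j \<in> S then (Re (z$j))\<^sup>2 + \<mu>s j * (Im (z$j))\<^sup>2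
          else (Re (z$j))\<^sup>2 - \<mu>s j * (Im (z$j))\<^sup>2)"
    "diag_form (\<lambda>_. 0) (\<lambda>j. if j \<in> S then 0 else \<delta> j) z z
      = (\<Sum>j\<in>UNIV. if j \<in> S then 0 else \<delta> j * (Im (z$j))\<^sup>2)"
    unfolding diag_form_def by (auto intro!: sum.cong simp: power2_eq_square)
  moreover have "UNIV \<inter> - {j. j \<in> S} = UNIV - S" "UNIV \<inter> {j. j \<in> S} = S" by auto
  ultimately show "(\<Sum>j\<in>S. (Re (z$j))\<^sup>2 + \<mu>s j * (Im (z$j))\<^sup>2)
      + (\<Sum>j\<in>UNIV - S. (Re (z$j))\<^sup>2 - \<mu>s j * (Im (z$j))\<^sup>2)
      + c ((norm z)\<^sup>2 / e2) * (\<Sum>j\<in>UNIV - S. \<delta> j * (Im (z$j))\<^sup>2)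
    = perturbed_quadric c (\<lambda>j. if j \<in> S then \<mu>s j else - \<mu>s j) (\<lambda>j. if j \<in> S then 0 else \<delta> j) e2 z"
    unfolding perturbed_quadric_def by (simp add: sum.If_cases)
qed

theorem lemma6p2:
  fixes m :: nat and cutoff :: "real \<Rightarrow> real" and \<mu> \<mu>' :: real
  assumes "m \<le> CARD('n::finite)"
    and "smooth_real cutoff"
    and "\<forall>t. 0 \<le> cutoff t \<and> cutoff t \<le> 1"
    and "\<forall>t\<in>{-1/2..1/2}. cutoff t = 1"
    and "fsupp cutoff \<subseteq> {-1<..<1}"
    and "0 < \<mu>" and "\<mu> < 1" and "0 < \<mu>'"
  shows "\<exists>\<delta>0. 0 < \<delta>0 \<and> \<delta>0 < 1 \<and>
    (\<forall>(S::'n set) (\<epsilon>::real) (\<mu>s::'n \<Rightarrow> real) (\<delta>::'n \<Rightarrow> real).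
       card S = m \<and> 0 < \<epsilon> \<and> \<epsilon> < 1 \<and>
       (\<forall>j\<in>S. \<mu>' \<le> \<mu>s j \<and> \<mu>s j \<le> 1) \<and>
       (\<forall>j. j \<notin> S \<longrightarrow> 0 \<le> \<mu>s j \<and> \<mu>s j \<le> \<mu>) \<and>
       (\<forall>j. j \<notin> S \<longrightarrow> 0 < \<delta> j \<and> \<delta> j \<le> \<mu>s j \<and> \<delta> j < \<delta>0)
       \<longrightarrow>
       (let \<rho>\<epsilon>\<delta> = (\<lambda>z::complex^'n.
               (\<Sum>j\<in>S. (Re (z$j))\<^sup>2 + \<mu>s j * (Im (z$j))\<^sup>2)
             + (\<Sum>j\<in>UNIV - S. (Re (z$j))\<^sup>2 - \<mu>s j * (Im (z$j))\<^sup>2)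
             + cutoff ((norm z)\<^sup>2 / \<epsilon>\<^sup>2) * (\<Sum>j\<in>UNIV - S. \<delta> j * (Im (z$j))\<^sup>2))
        in strictly_psh_on \<rho>\<epsilon>\<delta> (ball 0 \<epsilon>) \<and>
           (\<forall>p\<in>ball 0 \<epsilon>. (\<rho>\<epsilon>\<delta> has_derivative (\<lambda>_. 0)) (at p) \<longrightarrow> \<rho>\<epsilon>\<delta> p \<le> 0)))"
proof -
  note c_deriv = smooth_real_second_derivative[OF assms(2)]
  obtain K1 K2 where "0 \<le> K1" "0 \<le> K2"
    and K1: "\<forall>s\<in>{0..1}. \<bar>deriv cutoff s\<bar> \<le> K1" and K2: "\<forall>s\<in>{0..1}. \<bar>deriv (deriv cutoff) s\<bar> \<le> K2"
    using smooth_real_derivatives_bounded[OF assms(2) compact_Icc] by blast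
  obtain \<delta>0 where \<delta>0: "0 < \<delta>0" "\<delta>0 < 1" "\<delta>0 * (4 * K2 + 10 * K1 + 2) < min (1 - \<mu>) \<mu>'"
    using exists_small_pos_mult_less[of "4 * K2 + 10 * K1 + 2" "min (1 - \<mu>) \<mu>'"]
      \<open>0 \<le> K1\<close> \<open>0 \<le> K2\<close> assms(7,8) by auto
  moreover from this have "\<delta>0 * K1 < min (1 - \<mu>) \<mu>'"
    using mult_left_mono[of K1 "4 * K2 + 10 * K1 + 2" \<delta>0] \<open>0 \<le> K1\<close> \<open>0 \<le> K2\<close> by linarith
  ultimately show ?thesis
    unfolding split_quadric_eq_perturbed_quadric Let_def
  proof (intro exI[of _ \<delta>0] conjI allI impI ballI, goal_cases)
    case (3 S \<epsilon> \<mu>s \<delta>)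
    then show ?case
      by (intro strictly_psh_on_perturbed_quadric[where D = \<delta>0 and \<mu> = \<mu>, OF c_deriv assms(3) K1 K2])
         (use assms(6,8) in \<open>auto simp: less_imp_le\<close>)
  next
    case (4 S \<epsilon> \<mu>s \<delta> p)
    then show ?case
      by (intro perturbed_quadric_nonpos_at_critical_point[where D = \<delta>0 and \<mu>' = \<mu>' and S = S,
            OF c_deriv(1,2) assms(3) K1])
         (use assms(6) in \<open>auto simp: less_imp_le intro!: power_mono\<close>)
  qed
qed

end
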